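(* Let $A,B,C$ be $N\times N$ real symmetric positive semidefinite matrices and $0\leq k\leq N$. Then \[ e_{k}(A)+e_{k}(B)+e_{k}(C)+e_{k}(A+B+C)\geq e_{k}(A+B)+e_{k}(B+C)+e_{k}(C+A), \] where $e_{k}(X)$ denotes the $k$-th elementary symmetric function of the eigenvalues of $X$. *)

theory Defs
  imports "Jordan_Normal_Form.Char_Poly"
begin

definition psd_mat :: "nat \<Rightarrow> real mat \<Rightarrow> bool" where
  "psd_mat N A \<longleftrightarrow> A \<in> carrier_mat N N \<and> transpose_mat A = A \<and>
     (\<forall>v \<in> carrier_vec N. v \<bullet> (A *\<^sub>v v) \<ge> 0)"

definition is_eigenvalue_list :: "real mat \<Rightarrow> real list \<Rightarrow> bool" where
  "is_eigenvalue_list A ls \<longleftrightarrow> length ls = dim_row A \<and>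
     char_poly A = (\<Prod>a\<leftarrow>ls. [:- a, 1:])"

definition eigenvalue_list :: "real mat \<Rightarrow> real list" where
  "eigenvalue_list A = (SOME ls. is_eigenvalue_list A ls)"

definition elem_sym :: "nat \<Rightarrow> real list \<Rightarrow> real" where
  "elem_sym k ls = (\<Sum>S \<in> {S. S \<subseteq> {..<length ls} \<and> card S = k}. \<Prod>i\<in>S. ls ! i)"

definition e_k :: "nat \<Rightarrow> real mat \<Rightarrow> real" where
  "e_k k X = elem_sym k (eigenvalue_list X)"

end

theory Submission
  imports Defs
begin

(* e_k(X) is the sum of the k x k principal minors of X.  Write A, B, C as Gram matrices
   sum_{j in J} w_j w_j^T of one family of vectors over pairwise disjoint index sets J_A, J_B, J_C.
   By the Cauchy-Binet formula, the principal minor on S of the Gram matrix over an index set U is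
   F(U) = sum_{T subset U} g(T), where g(T) >= 0 is the squared minor of the family with rows T
   and columns S.  As J_A, J_B, J_C are pairwise disjoint, every T is counted at least as often in
   F(J_A) + F(J_B) + F(J_C) + F(J_A u J_B u J_C) as in F(J_A u J_B) + F(J_B u J_C) + F(J_C u J_A);
   summing over S gives the inequality. *)

section \<open>Real symmetric matrices have real eigenvalues\<close>

interpretation of_real_poly_hom: map_poly_inj_idom_hom "of_real :: real \<Rightarrow> complex" ..

lemma eigenvalue_real_symmetric_real:
  fixes A :: "real mat"
  assumes A: "A \<in> carrier_mat N N" and sym: "transpose_mat A = A"
    and ev: "eigenvalue (map_mat complex_of_real A) a"
  shows "a \<in> \<real>"
proof -
  obtain v where v: "v \<in> carrier_vec N" "v \<noteq> 0\<^sub>v N" "map_mat of_real A *\<^sub>v v = a \<cdot>\<^sub>v v"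
    using ev A unfolding eigenvalue_def eigenvector_def by auto
  have A_sym: "A $$ (i, j) = A $$ (j, i)" if "i < N" "j < N" for i j
    using sym A that by (metis carrier_matD index_transpose_mat(1))
  have row: "(\<Sum>j<N. of_real (A $$ (i, j)) * v $ j) = a * v $ i" if i: "i < N" for i
  proof -
    have "(map_mat of_real A *\<^sub>v v) $ i = (\<Sum>j<N. of_real (A $$ (i, j)) * v $ j)"
      using A v(1) i by (auto simp: scalar_prod_def lessThan_atLeast0 intro!: sum.cong)
    then show ?thesis using v(1,3) i by simp
  qed
  \<comment> \<open>the Hermitian form q of A at v is a times a positive real, and it is self-conjugate\<close>
  define q where "q = (\<Sum>i<N. \<Sum>j<N. cnj (v $ i) * of_real (A $$ (i, j)) * v $ j)"
  define r where "r = (\<Sum>i<N. (cmod (v $ i))\<^sup>2)"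
  have "q = (\<Sum>i<N. cnj (v $ i) * (\<Sum>j<N. of_real (A $$ (i, j)) * v $ j))"
    unfolding q_def by (simp add: sum_distrib_left mult.assoc)
  also have "\<dots> = a * (\<Sum>i<N. cnj (v $ i) * v $ i)"
    using row by (simp add: sum_distrib_left algebra_simps)
  also have "\<dots> = a * of_real r"
    unfolding r_def of_real_sum
    by (intro arg_cong[where f = "(*) a"] sum.cong refl) (metis complex_norm_square mult.commute)
  finally have q_eq: "q = a * of_real r" .
  have "cnj q = (\<Sum>i<N. \<Sum>j<N. v $ i * of_real (A $$ (i, j)) * cnj (v $ j))"
    unfolding q_def by simp
  also have "\<dots> = (\<Sum>j<N. \<Sum>i<N. v $ i * of_real (A $$ (i, j)) * cnj (v $ j))"
    by (rule sum.swap)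
  also have "\<dots> = q"
  proof -
    have "v $ i * of_real (A $$ (i, j)) * cnj (v $ j) = cnj (v $ j) * of_real (A $$ (j, i)) * v $ i"
      if "i < N" "j < N" for i j
      using A_sym[OF that] by (simp add: ac_simps)
    then show ?thesis unfolding q_def by (intro sum.cong refl) auto
  qed
  finally have "q \<in> \<real>" by (simp add: Reals_cnj_iff)
  obtain i where "i < N" "v $ i \<noteq> 0"
    using v(1,2) by (metis carrier_vecD eq_vecI index_zero_vec)
  then have "r > 0" unfolding r_def by (intro sum_pos2[of _ i]) auto
  then have "a = q / of_real r" unfolding q_eq by simp
  with \<open>q \<in> \<real>\<close> show ?thesis by simp
qed

lemma is_eigenvalue_list_eigenvalue_list:
  assumes A: "A \<in> carrier_mat N N" and sym: "transpose_mat A = A"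
  shows "is_eigenvalue_list A (eigenvalue_list A)"
proof -
  have C: "map_mat complex_of_real A \<in> carrier_mat N N" using A by simp
  obtain as where as: "char_poly (map_mat complex_of_real A) = (\<Prod>a\<leftarrow>as. [:- a, 1:])" "length as = N"
    using char_poly_factorized[OF C] by blast
  have "a \<in> \<real>" if "a \<in> set as" for a
  proof (rule eigenvalue_real_symmetric_real[OF A sym])
    have "poly (char_poly (map_mat complex_of_real A)) a = 0"
      using that unfolding as(1) by (induct as) auto
    then show "eigenvalue (map_mat complex_of_real A) a"
      using A by (simp add: eigenvalue_root_char_poly[of _ N])
  qed
  then have as_real: "map (complex_of_real \<circ> Re) as = as"
    by (simp add: map_idI)
  have "map_poly complex_of_real (\<Prod>a\<leftarrow>map Re as. [:- a, 1:]) =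
      (\<Prod>a\<leftarrow>map (complex_of_real \<circ> Re) as. [:- a, 1:])"
    by (simp add: of_real_poly_hom.hom_prod_list o_def)
  also have "\<dots> = (\<Prod>a\<leftarrow>as. [:- a, 1:])"
    using as_real by simp
  also have "\<dots> = map_poly complex_of_real (char_poly A)"
    unfolding as(1)[symmetric] by (rule of_real_hom.char_poly_hom[OF A])
  finally have "char_poly A = (\<Prod>a\<leftarrow>map Re as. [:- a, 1:])"
    by (rule of_real_poly_hom.injectivity[symmetric])
  then have "is_eigenvalue_list A (map Re as)"
    using A as(2) unfolding is_eigenvalue_list_def by simp
  then show ?thesis unfolding eigenvalue_list_def by (rule someI)
qed

section \<open>Elementary symmetric functions of the eigenvalues as sums of principal minors\<close>

definition principal_minor :: "nat set \<Rightarrow> (nat \<Rightarrow> nat \<Rightarrow> 'a :: comm_ring_1) \<Rightarrow> 'a" where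
  "principal_minor S M = (\<Sum>p | p permutes S. of_int (sign p) * (\<Prod>i\<in>S. M i (p i)))"

lemma prod_monom:
  "finite I \<Longrightarrow> (\<Prod>i\<in>I. monom (a i) (n i)) = monom (prod a I) (sum n I)"
  by (induct I rule: finite_induct) (simp_all add: mult_monom)

lemma prod_of_bool:
  "finite A \<Longrightarrow> (\<Prod>i\<in>A. of_bool (P i) :: 'a :: comm_semiring_1) = of_bool (\<forall>i\<in>A. P i)"
  by (induct A rule: finite_induct) auto

lemma coeff_prod_linear_factors:
  fixes a b :: "'i \<Rightarrow> 'a :: comm_ring_1"
  assumes I: "finite I" and k: "k \<le> card I"
  shows "coeff (\<Prod>i\<in>I. [:b i, a i:]) (card I - k) =
    (\<Sum>S | S \<subseteq> I \<and> card S = k. prod a (I - S) * prod b S)"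
proof -
  have "[:b i, a i:] = monom (b i) 0 + monom (a i) 1" for i
    by (rule poly_eqI) (simp add: coeff_pCons coeff_monom split: nat.split)
  then have "(\<Prod>i\<in>I. [:b i, a i:]) =
      (\<Sum>S\<in>Pow I. (\<Prod>i\<in>S. monom (b i) 0) * (\<Prod>i\<in>I - S. monom (a i) 1))"
    by (simp add: prod_add[OF I])
  also have "\<dots> = (\<Sum>S\<in>Pow I. monom (prod a (I - S) * prod b S) (card I - card S))"
    using I by (intro sum.cong refl)
      (auto simp: prod_monom mult_monom card_Diff_subset rev_finite_subset[OF I] mult.commute)
  finally have expansion: "coeff (\<Prod>i\<in>I. [:b i, a i:]) (card I - k) =
      (\<Sum>S\<in>Pow I. if card I - card S = card I - k then prod a (I - S) * prod b S else 0)"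
    by (simp add: coeff_sum coeff_monom eq_commute)
  have "card I - card S = card I - k \<longleftrightarrow> card S = k" if "S \<subseteq> I" for S
    using card_mono[OF I that] k by arith
  then have "coeff (\<Prod>i\<in>I. [:b i, a i:]) (card I - k) =
      (\<Sum>S\<in>Pow I. if card S = k then prod a (I - S) * prod b S else 0)"
    unfolding expansion by (intro sum.cong refl) auto
  also have "\<dots> = (\<Sum>S | S \<subseteq> I \<and> card S = k. prod a (I - S) * prod b S)"
    using I by (simp add: sum.inter_filter[symmetric] Pow_def conj_commute)
  finally show ?thesis .
qed

lemma coeff_prod_list_linear_factors:
  assumes "k \<le> length ls"
  shows "coeff (\<Prod>a\<leftarrow>ls. [:- a, 1:]) (length ls - k) = (-1) ^ k * elem_sym k ls"
proof -
  have "(\<Prod>a\<leftarrow>ls. [:- a, 1:]) = (\<Prod>i\<in>{..<length ls}. [:- ls ! i, 1:])"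
    by (simp add: prod.list_conv_set_nth lessThan_atLeast0)
  then show ?thesis
    using coeff_prod_linear_factors[of "{..<length ls}" k "\<lambda>i. - ls ! i" "\<lambda>_. 1"] assms
    by (simp add: elem_sym_def prod_uminus sum_distrib_left)
qed

lemma sum_permutes_fixing_outside:
  assumes "finite I" and "T \<subseteq> I"
  shows "(\<Sum>p | p permutes I. if \<forall>i\<in>I - T. p i = i then f p else 0) = (\<Sum>p | p permutes T. f p)"
proof -
  have "{p. p permutes I \<and> (\<forall>i\<in>I - T. p i = i)} = {p. p permutes T}"
    using assms by (auto simp: permutes_def)
  then show ?thesis
    using assms by (simp add: sum.inter_filter[symmetric] finite_permutations)
qed

lemma char_poly_sum_permutations:
  fixes X :: "'a :: comm_ring_1 mat"
  assumes X: "X \<in> carrier_mat N N"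
  shows "char_poly X = (\<Sum>p | p permutes {..<N}.
    of_int (sign p) * (\<Prod>i<N. [:- X $$ (i, p i), of_bool (p i = i):]))"
proof -
  have entry: "char_poly_matrix X $$ (i, j) = [:- X $$ (i, j), of_bool (j = i):]"
    if "i < N" "j < N" for i j
    using X that by (simp add: char_poly_matrix_def)
  show ?thesis
    unfolding char_poly_def using X
    by (auto simp: det_def'[of _ N] lessThan_atLeast0 entry permutes_in_image
        intro!: sum.cong prod.cong)
qed

lemma coeff_char_poly_principal_minors:
  fixes X :: "'a :: comm_ring_1 mat"
  assumes X: "X \<in> carrier_mat N N" and k: "k \<le> N"
  shows "coeff (char_poly X) (N - k) =
    (-1) ^ k * (\<Sum>S | S \<subseteq> {..<N} \<and> card S = k. principal_minor S (\<lambda>i j. X $$ (i, j)))"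
proof -
  let ?I = "{..<N}"
  have "coeff (char_poly X) (N - k) = (\<Sum>p | p permutes ?I. of_int (sign p) *
      (\<Sum>S | S \<subseteq> ?I \<and> card S = k. (\<Prod>i\<in>?I - S. of_bool (p i = i)) * (\<Prod>i\<in>S. - X $$ (i, p i))))"
  proof -
    have "coeff (\<Prod>i\<in>?I. [:- X $$ (i, p i), of_bool (p i = i):]) (N - k) =
        (\<Sum>S | S \<subseteq> ?I \<and> card S = k. (\<Prod>i\<in>?I - S. of_bool (p i = i)) * (\<Prod>i\<in>S. - X $$ (i, p i)))"
      for p
      using coeff_prod_linear_factors[of ?I k "\<lambda>i. - X $$ (i, p i)" "\<lambda>i. of_bool (p i = i)"] k
      by simp
    then show ?thesis by (simp add: char_poly_sum_permutations[OF X] coeff_sum of_int_poly)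
  qed
  also have "\<dots> = (\<Sum>S | S \<subseteq> ?I \<and> card S = k. \<Sum>p | p permutes ?I.
      of_int (sign p) * ((\<Prod>i\<in>?I - S. of_bool (p i = i)) * (\<Prod>i\<in>S. - X $$ (i, p i))))"
    unfolding sum_distrib_left by (rule sum.swap)
  also have "\<dots> = (\<Sum>S | S \<subseteq> ?I \<and> card S = k. (-1) ^ k * principal_minor S (\<lambda>i j. X $$ (i, j)))"
  proof (intro sum.cong refl)
    fix S assume "S \<in> {S. S \<subseteq> ?I \<and> card S = k}"
    then have S: "S \<subseteq> ?I" "card S = k" by auto
    have "(\<Sum>p | p permutes ?I.
        of_int (sign p) * ((\<Prod>i\<in>?I - S. of_bool (p i = i)) * (\<Prod>i\<in>S. - X $$ (i, p i)))) =
      (\<Sum>p | p permutes ?I.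
        if \<forall>i\<in>?I - S. p i = i then of_int (sign p) * (\<Prod>i\<in>S. - X $$ (i, p i)) else 0)"
      by (intro sum.cong refl) (simp add: prod_of_bool)
    also have "\<dots> = (\<Sum>p | p permutes S. of_int (sign p) * (\<Prod>i\<in>S. - X $$ (i, p i)))"
      by (rule sum_permutes_fixing_outside) (use S in auto)
    also have "\<dots> = (-1) ^ k * principal_minor S (\<lambda>i j. X $$ (i, j))"
      using S by (simp add: principal_minor_def prod_uminus sum_distrib_left ac_simps)
    finally show "(\<Sum>p | p permutes ?I.
        of_int (sign p) * ((\<Prod>i\<in>?I - S. of_bool (p i = i)) * (\<Prod>i\<in>S. - X $$ (i, p i)))) =
      (-1) ^ k * principal_minor S (\<lambda>i j. X $$ (i, j))" .
  qed
  finally show ?thesis by (simp add: sum_distrib_left)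
qed

lemma e_k_principal_minors:
  assumes X: "X \<in> carrier_mat N N" and sym: "transpose_mat X = X" and k: "k \<le> N"
  shows "e_k k X = (\<Sum>S | S \<subseteq> {..<N} \<and> card S = k. principal_minor S (\<lambda>i j. X $$ (i, j)))"
proof -
  have "length (eigenvalue_list X) = N"
    and "char_poly X = (\<Prod>a\<leftarrow>eigenvalue_list X. [:- a, 1:])"
    using is_eigenvalue_list_eigenvalue_list[OF X sym] X unfolding is_eigenvalue_list_def by auto
  then have "(-1) ^ k * e_k k X = coeff (char_poly X) (N - k)"
    using coeff_prod_list_linear_factors[of k "eigenvalue_list X"] k by (simp add: e_k_def)
  also have "\<dots> = (-1) ^ k * (\<Sum>S | S \<subseteq> {..<N} \<and> card S = k. principal_minor S (\<lambda>i j. X $$ (i, j)))"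
    by (rule coeff_char_poly_principal_minors[OF X k])
  finally show ?thesis by simp
qed

section \<open>Gram decomposition of positive semidefinite matrices\<close>

definition quad_form :: "nat \<Rightarrow> (nat \<Rightarrow> nat \<Rightarrow> real) \<Rightarrow> (nat \<Rightarrow> real) \<Rightarrow> real" where
  "quad_form N M x = (\<Sum>i<N. \<Sum>j<N. x i * M i j * x j)"

definition psd_fun :: "nat \<Rightarrow> (nat \<Rightarrow> nat \<Rightarrow> real) \<Rightarrow> bool" where
  "psd_fun N M \<longleftrightarrow> (\<forall>i<N. \<forall>j<N. M i j = M j i) \<and> (\<forall>x. 0 \<le> quad_form N M x)"

lemma quad_form_add_unit:
  assumes k: "k < N" and sym: "\<forall>i<N. \<forall>j<N. M i j = M j i"
  shows "quad_form N M (\<lambda>i. x i + (if i = k then t else 0)) =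
    quad_form N M x + 2 * t * (\<Sum>j<N. M k j * x j) + t\<^sup>2 * M k k"
proof -
  have sum_if: "(\<Sum>j<N. if P then f j else 0) = (if P then \<Sum>j<N. f j else 0)"
    for P and f :: "nat \<Rightarrow> real"
    by simp
  have "quad_form N M (\<lambda>i. x i + (if i = k then t else 0)) =
      quad_form N M x + (\<Sum>i<N. t * M k i * x i) + (\<Sum>i<N. x i * M i k * t) + t * M k k * t"
    unfolding quad_form_def
    by (simp add: algebra_simps sum.distrib if_distrib[of "\<lambda>y. y * _"] if_distrib[of "\<lambda>y. _ * y"]
        sum.delta' k sum_if cong: if_cong)
  also have "(\<Sum>i<N. x i * M i k * t) = (\<Sum>i<N. t * M k i * x i)"
    using sym k by (intro sum.cong refl) simp
  finally show ?thesis
    by (simp add: power2_eq_square sum_distrib_left algebra_simps)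
qed

lemma quad_form_zero [simp]: "quad_form N M (\<lambda>_. 0) = 0"
  by (simp add: quad_form_def)

lemma psd_fun_diag_nonneg:
  assumes "psd_fun N M" and "k < N"
  shows "0 \<le> M k k"
proof -
  have "0 \<le> quad_form N M (\<lambda>i. 0 + (if i = k then 1 else 0))"
    using assms(1) unfolding psd_fun_def by blast
  also have "\<dots> = M k k"
    using assms quad_form_add_unit[of k N M "\<lambda>_. 0" 1] unfolding psd_fun_def by simp
  finally show ?thesis .
qed

lemma psd_fun_diag_zero:
  assumes psd: "psd_fun N M" and k: "k < N" and i: "i < N" and diag: "M k k = 0"
  shows "M i k = 0"
proof (rule ccontr)
  assume "M i k \<noteq> 0"
  define x :: "nat \<Rightarrow> real" where "x = (\<lambda>j. if j = i then 1 else 0)"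
  have sym: "\<forall>i<N. \<forall>j<N. M i j = M j i" using psd unfolding psd_fun_def by blast
  then have "M k i \<noteq> 0" using \<open>M i k \<noteq> 0\<close> i k by simp
  have "(\<Sum>j<N. M k j * x j) = M k i" using i by (simp add: x_def if_distrib cong: if_cong)
  define t where "t = - (quad_form N M x + 1) / (2 * M k i)"
  \<comment> \<open>along the line x + t e_k the form is affine in t, so it takes negative values\<close>
  have "0 \<le> quad_form N M (\<lambda>j. x j + (if j = k then t else 0))"
    using psd unfolding psd_fun_def by blast
  also have "\<dots> = quad_form N M x + 2 * t * M k i"
    using quad_form_add_unit[OF k sym] \<open>(\<Sum>j<N. M k j * x j) = M k i\<close> diag by simp
  also have "\<dots> = -1"
    using \<open>M k i \<noteq> 0\<close> by (simp add: t_def field_simps)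
  finally show False by simp
qed

definition schur_complement :: "nat \<Rightarrow> (nat \<Rightarrow> nat \<Rightarrow> real) \<Rightarrow> nat \<Rightarrow> nat \<Rightarrow> real" where
  "schur_complement k M i j = M i j - M i k * M k j / M k k"

lemma psd_fun_schur_complement:
  assumes psd: "psd_fun N M" and k: "k < N"
  shows "psd_fun N (schur_complement k M)"
proof (cases "M k k = 0")
  case True
  then have "schur_complement k M = M" by (simp add: schur_complement_def fun_eq_iff)
  then show ?thesis using psd by simp
next
  case False
  have sym: "\<forall>i<N. \<forall>j<N. M i j = M j i" using psd unfolding psd_fun_def by blast
  have c: "M k k > 0" using psd_fun_diag_nonneg[OF psd k] False by simp
  have "0 \<le> quad_form N (schur_complement k M) x" for x
  proof -
    define s where "s = (\<Sum>j<N. M k j * x j)"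
    have "(\<Sum>i<N. x i * M i k) = s"
      unfolding s_def using sym k by (intro sum.cong refl) (simp add: mult.commute)
    have "quad_form N (schur_complement k M) x =
        quad_form N M x - (\<Sum>i<N. x i * M i k) * (\<Sum>j<N. M k j * x j) / M k k"
      unfolding quad_form_def schur_complement_def
      by (simp add: sum_subtractf right_diff_distrib left_diff_distrib sum_product
          sum_divide_distrib ac_simps)
    also have "\<dots> = quad_form N M x - s\<^sup>2 / M k k"
      using \<open>(\<Sum>i<N. x i * M i k) = s\<close> by (simp add: s_def power2_eq_square)
    also have "\<dots> = quad_form N M (\<lambda>i. x i + (if i = k then - s / M k k else 0))"
      unfolding quad_form_add_unit[OF k sym] s_def[symmetric]
      using c by (simp add: field_simps power2_eq_square)
    also have "\<dots> \<ge> 0" using psd unfolding psd_fun_def by blast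
    finally show ?thesis .
  qed
  moreover have "\<forall>i<N. \<forall>j<N. schur_complement k M i j = schur_complement k M j i"
    using sym k by (simp add: schur_complement_def mult.commute)
  ultimately show ?thesis unfolding psd_fun_def by blast
qed

lemma schur_complement_pivot_column:
  assumes "psd_fun N M" and "k < N" and "i < N"
  shows "schur_complement k M i k = 0"
  using psd_fun_diag_zero[OF assms] by (cases "M k k = 0") (simp_all add: schur_complement_def)

definition gram :: "'j set \<Rightarrow> ('j \<Rightarrow> nat \<Rightarrow> 'a :: comm_semiring_1) \<Rightarrow> nat \<Rightarrow> nat \<Rightarrow> 'a" where
  "gram J W i j = (\<Sum>l\<in>J. W l i * W l j)"

lemma gram_union:
  "finite U \<Longrightarrow> finite V \<Longrightarrow> U \<inter> V = {} \<Longrightarrow> gram (U \<union> V) W i j = gram U W i j + gram V W i j"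
  unfolding gram_def by (rule sum.union_disjoint)

lemma gram_image: "inj_on g J \<Longrightarrow> gram (g ` J) W = gram J (\<lambda>l. W (g l))"
  by (simp add: gram_def sum.reindex fun_eq_iff)

lemma psd_fun_gram_from:
  assumes "k \<le> N" and "psd_fun N M" and "\<forall>i<N. \<forall>l<k. M i l = 0"
  shows "\<exists>W. \<forall>i<N. \<forall>j<N. M i j = gram {k..<N} W i j"
  using assms
proof (induction k arbitrary: M rule: inc_induct)
  case base
  then show ?case by (auto simp: gram_def)
next
  case (step k)
  have sym: "\<forall>i<N. \<forall>j<N. M i j = M j i" using step.prems(1) unfolding psd_fun_def by blast
  have "\<forall>i<N. \<forall>l<Suc k. schur_complement k M i l = 0"
  proof (intro allI impI)
    fix i l assume "i < N" "l < Suc k"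
    then consider "l = k" | "l < k" by linarith
    then show "schur_complement k M i l = 0"
    proof cases
      case 1
      then show ?thesis
        using schur_complement_pivot_column[OF step.prems(1) step.hyps(2) \<open>i < N\<close>] by simp
    next
      case 2
      then show ?thesis using step.prems(2) \<open>i < N\<close> step.hyps(2) by (simp add: schur_complement_def)
    qed
  qed
  with step.IH psd_fun_schur_complement[OF step.prems(1) step.hyps(2)]
  obtain W where W: "\<forall>i<N. \<forall>j<N. schur_complement k M i j = gram {Suc k..<N} W i j"
    by blast
  define W' where "W' = W(k := (\<lambda>i. M i k / sqrt (M k k)))"
  \<comment> \<open>for M k k = 0 this is the zero vector, since division by zero yields 0\<close>
  have "M i j = gram {k..<N} W' i j" if "i < N" "j < N" for i j
  proof -
    have "W' k i * W' k j = M i k * M k j / M k k"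
      using psd_fun_diag_nonneg[OF step.prems(1) step.hyps(2)] sym that step.hyps(2)
      by (simp add: W'_def real_sqrt_mult_self)
    moreover have "gram {k..<N} W' i j = W' k i * W' k j + gram {Suc k..<N} W i j"
      using step.hyps(2) by (simp add: gram_def W'_def sum.atLeast_Suc_lessThan)
    moreover have "schur_complement k M i j = gram {Suc k..<N} W i j" using W that by blast
    ultimately show ?thesis unfolding schur_complement_def by linarith
  qed
  then show ?case by blast
qed

lemma psd_mat_imp_psd_fun:
  assumes "psd_mat N A"
  shows "psd_fun N (\<lambda>i j. A $$ (i, j))"
proof -
  have A: "A \<in> carrier_mat N N" and sym: "transpose_mat A = A"
    and pos: "\<And>v. v \<in> carrier_vec N \<Longrightarrow> 0 \<le> v \<bullet> (A *\<^sub>v v)"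
    using assms unfolding psd_mat_def by auto
  have "\<forall>i<N. \<forall>j<N. A $$ (i, j) = A $$ (j, i)"
    using sym A by (metis carrier_matD index_transpose_mat(1))
  moreover have "0 \<le> quad_form N (\<lambda>i j. A $$ (i, j)) x" for x
  proof -
    have "vec N x \<bullet> (A *\<^sub>v vec N x) = quad_form N (\<lambda>i j. A $$ (i, j)) x"
      using A unfolding quad_form_def
      by (auto simp: scalar_prod_def lessThan_atLeast0 sum_distrib_left mult.assoc intro!: sum.cong)
    then show ?thesis using pos[of "vec N x"] by simp
  qed
  ultimately show ?thesis unfolding psd_fun_def by blast
qed

lemma psd_mat_gram:
  assumes "psd_mat N A"
  shows "\<exists>W. \<forall>i<N. \<forall>j<N. A $$ (i, j) = gram {..<N} W i j"
  using psd_fun_gram_from[OF _ psd_mat_imp_psd_fun[OF assms], of 0] by (simp add: atLeast0LessThan)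

section \<open>The Cauchy-Binet formula for principal minors of Gram matrices\<close>

lemma principal_minor_cong:
  fixes M :: "nat \<Rightarrow> nat \<Rightarrow> 'a :: comm_ring_1"
  assumes "\<And>i j. i \<in> S \<Longrightarrow> j \<in> S \<Longrightarrow> M i j = M' i j"
  shows "principal_minor S M = principal_minor S M'"
  unfolding principal_minor_def
  using assms
  by (intro sum.cong refl arg_cong2[where f = "(*)"] prod.cong) (auto simp: permutes_in_image)

lemma principal_minor_equal_rows:
  fixes M :: "nat \<Rightarrow> nat \<Rightarrow> 'a :: {idom, ring_char_0}"
  assumes S: "finite S" and ab: "a \<in> S" "b \<in> S" "a \<noteq> b" and rows: "M a = M b"
  shows "principal_minor S M = 0"
proof -
  \<comment> \<open>composing with the transposition of a and b negates every term, so the minor equals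
    its own negative; this is where characteristic 0 is used\<close>
  let ?t = "Transposition.transpose a b"
  have t: "?t permutes S" using permutes_swap_id[OF ab(1,2)] .
  have "principal_minor S M =
      (\<Sum>p | p permutes S. of_int (sign (p \<circ> ?t)) * (\<Prod>i\<in>S. M i ((p \<circ> ?t) i)))"
    unfolding principal_minor_def by (rule sum_permutations_compose_right[OF t])
  also have "\<dots> = (\<Sum>p | p permutes S. - (of_int (sign p) * (\<Prod>i\<in>S. M i (p i))))"
  proof (intro sum.cong refl)
    fix p assume "p \<in> {p. p permutes S}"
    then have p: "p permutes S" by simp
    have "sign (p \<circ> ?t) = - sign p"
      using sign_compose[OF permutes_imp_permutation[OF S p] permutes_imp_permutation[OF S t]] ab(3)
      by (simp add: sign_swap_id)
    moreover have "(\<Prod>i\<in>S. M i ((p \<circ> ?t) i)) = (\<Prod>i\<in>S. M (?t i) (p (?t i)))"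
      using rows by (intro prod.cong refl) (simp add: Transposition.transpose_def)
    moreover have "\<dots> = (\<Prod>i\<in>S. M i (p i))"
      using prod.permute[OF t, of "\<lambda>i. M i (p i)"] by (simp add: o_def)
    ultimately show "of_int (sign (p \<circ> ?t)) * (\<Prod>i\<in>S. M i ((p \<circ> ?t) i)) =
        - (of_int (sign p) * (\<Prod>i\<in>S. M i (p i)))"
      by simp
  qed
  also have "\<dots> = - principal_minor S M" unfolding principal_minor_def by (simp add: sum_negf)
  finally show ?thesis by simp
qed

lemma principal_minor_permute_rows:
  fixes M :: "nat \<Rightarrow> nat \<Rightarrow> 'a :: comm_ring_1"
  assumes S: "finite S" and s: "s permutes S"
  shows "principal_minor S (\<lambda>i. M (s i)) = of_int (sign s) * principal_minor S M"
proof -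
  let ?s' = "inv_into UNIV s"
  have "principal_minor S (\<lambda>i. M (s i)) =
      (\<Sum>p | p permutes S. of_int (sign p) * (\<Prod>i\<in>S. M i (p (?s' i))))"
    unfolding principal_minor_def
    using prod.permutes_inv[OF s, of "\<lambda>a i. M a (_ i)"] by (intro sum.cong refl) simp
  also have "\<dots> = (\<Sum>p | p permutes S. of_int (sign (p \<circ> s)) * (\<Prod>i\<in>S. M i ((p \<circ> s) (?s' i))))"
    by (rule sum_permutations_compose_right[OF s])
  also have "\<dots> = (\<Sum>p | p permutes S. of_int (sign s) * (of_int (sign p) * (\<Prod>i\<in>S. M i (p i))))"
  proof (intro sum.cong refl)
    fix p assume "p \<in> {p. p permutes S}"
    then have "sign (p \<circ> s) = sign p * sign s"
      using sign_compose permutes_imp_permutation[OF S] s by blast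
    moreover have "(p \<circ> s) (?s' i) = p i" for i using permutes_inverses(1)[OF s] by simp
    ultimately show "of_int (sign (p \<circ> s)) * (\<Prod>i\<in>S. M i ((p \<circ> s) (?s' i))) =
        of_int (sign s) * (of_int (sign p) * (\<Prod>i\<in>S. M i (p i)))"
      by simp
  qed
  also have "\<dots> = of_int (sign s) * principal_minor S M"
    unfolding principal_minor_def by (simp add: sum_distrib_left)
  finally show ?thesis .
qed

lemma principal_minor_transpose:
  fixes M :: "nat \<Rightarrow> nat \<Rightarrow> 'a :: comm_ring_1"
  assumes S: "finite S"
  shows "principal_minor S (\<lambda>i j. M j i) = principal_minor S M"
proof -
  have "principal_minor S (\<lambda>i j. M j i) =
      (\<Sum>p | p permutes S. of_int (sign p) * (\<Prod>i\<in>S. M i (inv_into UNIV p i)))"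
    unfolding principal_minor_def
    using prod.permutes_inv[of _ S M] by (intro sum.cong refl) simp
  also have "\<dots> = (\<Sum>p | p permutes S. of_int (sign (inv_into UNIV p)) *
      (\<Prod>i\<in>S. M i (inv_into UNIV (inv_into UNIV p) i)))"
    by (rule sum_permutations_inverse)
  also have "\<dots> = principal_minor S M"
    unfolding principal_minor_def
    by (intro sum.cong refl)
      (simp add: permutes_inv_inv sign_inverse permutes_imp_permutation[OF S])
  finally show ?thesis .
qed

lemma principal_minor_gram_expansion:
  fixes W :: "'j \<Rightarrow> nat \<Rightarrow> 'a :: comm_ring_1"
  assumes S: "finite S" and J: "finite J"
  shows "principal_minor S (gram J W) =
    (\<Sum>f\<in>S \<rightarrow>\<^sub>E J. (\<Prod>i\<in>S. W (f i) i) * principal_minor S (\<lambda>i. W (f i)))"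
proof -
  have "principal_minor S (gram J W) = (\<Sum>p | p permutes S. of_int (sign p) *
      (\<Sum>f\<in>S \<rightarrow>\<^sub>E J. \<Prod>i\<in>S. W (f i) i * W (f i) (p i)))"
    unfolding principal_minor_def gram_def by (simp add: prod_sum_PiE[OF S J])
  also have "\<dots> = (\<Sum>f\<in>S \<rightarrow>\<^sub>E J. \<Sum>p | p permutes S. of_int (sign p) *
      (\<Prod>i\<in>S. W (f i) i * W (f i) (p i)))"
    unfolding sum_distrib_left by (rule sum.swap)
  also have "\<dots> = (\<Sum>f\<in>S \<rightarrow>\<^sub>E J. (\<Prod>i\<in>S. W (f i) i) * principal_minor S (\<lambda>i. W (f i)))"
    unfolding principal_minor_def
    by (intro sum.cong refl) (simp add: sum_distrib_left prod.distrib ac_simps)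
  finally show ?thesis .
qed

lemma sum_surjections_permutations:
  assumes S: "finite S" and h: "bij_betw h S T"
  shows "(\<Sum>f | f \<in> S \<rightarrow>\<^sub>E T \<and> f ` S = T. g f) = (\<Sum>s | s permutes S. g (restrict (h \<circ> s) S))"
proof -
  let ?i = "\<lambda>s. restrict (h \<circ> s) S"
  let ?j = "\<lambda>f x. if x \<in> S then inv_into S h (f x) else x"
  have inj_h: "inj_on h S" and hS: "h ` S = T" using h by (auto simp: bij_betw_def)
  show ?thesis
  proof (rule sum.reindex_bij_witness[of _ ?i ?j])
    fix s assume "s \<in> {s. s permutes S}"
    then have s: "s permutes S" by simp
    show "?j (?i s) = s"
      using s inj_h by (auto simp: fun_eq_iff permutes_in_image permutes_not_in)
    have "(h \<circ> s) ` S = T" using permutes_image[OF s] hS by (metis image_comp)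
    then show "?i s \<in> {f. f \<in> S \<rightarrow>\<^sub>E T \<and> f ` S = T}" by auto
  next
    fix f assume "f \<in> {f. f \<in> S \<rightarrow>\<^sub>E T \<and> f ` S = T}"
    then have f: "f \<in> S \<rightarrow>\<^sub>E T" "f ` S = T" by auto
    show "?i (?j f) = f"
    proof
      fix x
      show "?i (?j f) x = f x"
      proof (cases "x \<in> S")
        case True
        then have "f x \<in> h ` S" using PiE_mem[OF f(1) True] hS by simp
        then show ?thesis using True by (simp add: f_inv_into_f)
      next
        case False
        then show ?thesis using PiE_arb[OF f(1) False] by simp
      qed
    qed
    have "card S = card T" using bij_betw_same_card[OF h] .
    then have "bij_betw f S T" using f S by (simp add: bij_betw_def eq_card_imp_inj_on)
    then have "bij_betw (inv_into S h \<circ> f) S S"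
      using bij_betw_trans bij_betw_inv_into[OF h] by blast
    then have "bij_betw (?j f) S S" by (rule bij_betw_cong[THEN iffD1, rotated]) auto
    then show "?j f \<in> {s. s permutes S}" by (auto dest: bij_imp_permutes)
    show "g (?i (?j f)) = g f" using \<open>?i (?j f) = f\<close> by simp
  qed
qed

(* For card T = card S this is the square of the minor of W with rows T and columns S;
   otherwise it vanishes. *)
definition cauchy_binet_term :: "nat set \<Rightarrow> ('j \<Rightarrow> nat \<Rightarrow> 'a :: comm_ring_1) \<Rightarrow> 'j set \<Rightarrow> 'a" where
  "cauchy_binet_term S W T =
    (\<Sum>f | f \<in> S \<rightarrow>\<^sub>E T \<and> f ` S = T. (\<Prod>i\<in>S. W (f i) i) * principal_minor S (\<lambda>i. W (f i)))"

lemma cauchy_binet_term_nonneg: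
  fixes W :: "'j \<Rightarrow> nat \<Rightarrow> 'a :: linordered_idom"
  assumes S: "finite S" and T: "finite T"
  shows "0 \<le> cauchy_binet_term S W T"
proof (cases "card T = card S")
  case True
  then obtain h where h: "bij_betw h S T" using finite_same_card_bij[OF S T] by metis
  let ?d = "principal_minor S (\<lambda>i. W (h i))"
  have "cauchy_binet_term S W T =
      (\<Sum>s | s permutes S. (\<Prod>i\<in>S. W (h (s i)) i) * principal_minor S (\<lambda>i. W (h (s i))))"
    unfolding cauchy_binet_term_def sum_surjections_permutations[OF S h]
    by (intro sum.cong refl arg_cong2[where f = "(*)"] prod.cong principal_minor_cong) auto
  also have "\<dots> = (\<Sum>s | s permutes S. ?d * (of_int (sign s) * (\<Prod>i\<in>S. W (h (s i)) i)))"
    by (intro sum.cong refl)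
      (simp add: principal_minor_permute_rows[OF S, where M = "\<lambda>i. W (h i)"] ac_simps)
  also have "\<dots> = ?d * principal_minor S (\<lambda>i j. W (h j) i)"
    by (simp add: principal_minor_def[of S "\<lambda>i j. W (h j) i"] sum_distrib_left)
  also have "\<dots> = ?d * ?d"
    using principal_minor_transpose[OF S, of "\<lambda>i j. W (h i) j"] by simp
  finally show ?thesis by simp
next
  case False
  have "principal_minor S (\<lambda>i. W (f i)) = 0" if "f ` S = T" for f
  proof -
    from that False have "\<not> inj_on f S" using card_image by blast
    then obtain a b where "a \<in> S" "b \<in> S" "a \<noteq> b" "f a = f b" unfolding inj_on_def by blast
    then show ?thesis by (intro principal_minor_equal_rows[OF S, where a = a and b = b]) auto
  qed
  then show ?thesis unfolding cauchy_binet_term_def by simp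
qed

lemma principal_minor_gram:
  assumes S: "finite S" and J: "finite J"
  shows "principal_minor S (gram J W) = (\<Sum>T\<in>Pow J. cauchy_binet_term S W T)"
proof -
  have "(\<Sum>T\<in>Pow J. cauchy_binet_term S W T) =
      (\<Sum>T\<in>Pow J. \<Sum>f | f \<in> S \<rightarrow>\<^sub>E J \<and> f ` S = T. (\<Prod>i\<in>S. W (f i) i) * principal_minor S (\<lambda>i. W (f i)))"
    unfolding cauchy_binet_term_def
    by (intro sum.cong refl arg_cong2[where f = sum]) (auto simp: PiE_iff)
  also have "\<dots> = (\<Sum>f\<in>S \<rightarrow>\<^sub>E J. (\<Prod>i\<in>S. W (f i) i) * principal_minor S (\<lambda>i. W (f i)))"
    using S J by (intro sum.group) (auto simp: finite_PiE)
  finally show ?thesis by (simp add: principal_minor_gram_expansion[OF S J])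
qed

section \<open>Inclusion-exclusion for Gram matrices over disjoint index sets\<close>

lemma sum_Pow_inclusion_exclusion_le:
  fixes g :: "'a set \<Rightarrow> 'b :: linordered_semidom"
  assumes fin: "finite A" "finite B" "finite C"
    and disj: "A \<inter> B = {}" "B \<inter> C = {}" "C \<inter> A = {}"
    and nonneg: "\<And>T. T \<subseteq> A \<union> B \<union> C \<Longrightarrow> 0 \<le> g T"
  defines "F \<equiv> \<lambda>U. \<Sum>T\<in>Pow U. g T"
  shows "F (A \<union> B) + F (B \<union> C) + F (C \<union> A) \<le> F A + F B + F C + F (A \<union> B \<union> C)"
proof -
  let ?J = "A \<union> B \<union> C"
  let ?n = "\<lambda>U T. of_bool (T \<subseteq> U) * g T"
  have J: "finite ?J" using fin by simp
  have F: "F U = (\<Sum>T\<in>Pow ?J. ?n U T)" if "U \<subseteq> ?J" for U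
    unfolding F_def using that J
    by (simp add: sum.inter_filter[symmetric] finite_subset) (intro sum.cong; auto)
  \<comment> \<open>the empty set and the sets meeting all three parts are counted once more on the right,
    all other sets equally often on both sides\<close>
  have "?n (A \<union> B) T + ?n (B \<union> C) T + ?n (C \<union> A) T \<le> ?n A T + ?n B T + ?n C T + ?n ?J T"
    if "T \<subseteq> ?J" for T
    using that disj nonneg[OF that] by (auto simp: of_bool_def)
  then have "(\<Sum>T\<in>Pow ?J. ?n (A \<union> B) T + ?n (B \<union> C) T + ?n (C \<union> A) T) \<le>
      (\<Sum>T\<in>Pow ?J. ?n A T + ?n B T + ?n C T + ?n ?J T)"
    by (intro sum_mono) auto
  moreover have "A \<union> B \<subseteq> ?J" "B \<union> C \<subseteq> ?J" "C \<union> A \<subseteq> ?J" "A \<subseteq> ?J" "B \<subseteq> ?J" "C \<subseteq> ?J"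
    by auto
  ultimately show ?thesis
    by (simp only: F sum.distrib order_refl)
qed

lemma e_k_gram:
  fixes W :: "'j \<Rightarrow> nat \<Rightarrow> real"
  assumes X: "X \<in> carrier_mat N N" and k: "k \<le> N"
    and XW: "\<forall>i<N. \<forall>j<N. X $$ (i, j) = gram J W i j"
  shows "e_k k X = (\<Sum>S | S \<subseteq> {..<N} \<and> card S = k. principal_minor S (gram J W))"
proof -
  have "transpose_mat X = X"
    using X XW by (auto simp: gram_def mult.commute intro!: eq_matI)
  then show ?thesis
    using e_k_principal_minors[OF X _ k] XW by (auto intro!: sum.cong principal_minor_cong)
qed

lemma principal_minor_gram_inclusion_exclusion:
  fixes W :: "'j \<Rightarrow> nat \<Rightarrow> 'a :: linordered_idom"
  assumes S: "finite S" and fin: "finite JA" "finite JB" "finite JC"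
    and disj: "JA \<inter> JB = {}" "JB \<inter> JC = {}" "JC \<inter> JA = {}"
  shows "principal_minor S (gram (JA \<union> JB) W) + principal_minor S (gram (JB \<union> JC) W)
      + principal_minor S (gram (JC \<union> JA) W)
    \<le> principal_minor S (gram JA W) + principal_minor S (gram JB W) + principal_minor S (gram JC W)
      + principal_minor S (gram (JA \<union> JB \<union> JC) W)"
  using sum_Pow_inclusion_exclusion_le[OF fin disj, of "cauchy_binet_term S W"] S fin
  by (simp add: principal_minor_gram cauchy_binet_term_nonneg finite_subset)

lemma gram_entries_add:
  assumes "X \<in> carrier_mat N N" "Y \<in> carrier_mat N N"
    and "finite U" "finite V" "U \<inter> V = {}"
    and "\<forall>i<N. \<forall>j<N. X $$ (i, j) = gram U W i j" "\<forall>i<N. \<forall>j<N. Y $$ (i, j) = gram V W i j"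
  shows "\<forall>i<N. \<forall>j<N. (X + Y) $$ (i, j) = gram (U \<union> V) W i j"
  using assms gram_union[OF assms(3-5), of W] by simp

lemma e_k_gram_inclusion_exclusion:
  fixes W :: "'j \<Rightarrow> nat \<Rightarrow> real"
  assumes carrier: "A \<in> carrier_mat N N" "B \<in> carrier_mat N N" "C \<in> carrier_mat N N"
    and k: "k \<le> N" and fin: "finite JA" "finite JB" "finite JC"
    and disj: "JA \<inter> JB = {}" "JB \<inter> JC = {}" "JC \<inter> JA = {}"
    and gram_A: "\<forall>i<N. \<forall>j<N. A $$ (i, j) = gram JA W i j"
    and gram_B: "\<forall>i<N. \<forall>j<N. B $$ (i, j) = gram JB W i j"
    and gram_C: "\<forall>i<N. \<forall>j<N. C $$ (i, j) = gram JC W i j"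
  shows "e_k k (A + B) + e_k k (B + C) + e_k k (C + A)
    \<le> e_k k A + e_k k B + e_k k C + e_k k (A + B + C)"
proof -
  let ?e = "\<lambda>U. \<Sum>S | S \<subseteq> {..<N} \<and> card S = k. principal_minor S (gram U W)"
  have gram_AB: "\<forall>i<N. \<forall>j<N. (A + B) $$ (i, j) = gram (JA \<union> JB) W i j"
    by (rule gram_entries_add[OF carrier(1,2) fin(1,2) disj(1) gram_A gram_B])
  have gram_BC: "\<forall>i<N. \<forall>j<N. (B + C) $$ (i, j) = gram (JB \<union> JC) W i j"
    by (rule gram_entries_add[OF carrier(2,3) fin(2,3) disj(2) gram_B gram_C])
  have gram_CA: "\<forall>i<N. \<forall>j<N. (C + A) $$ (i, j) = gram (JC \<union> JA) W i j"
    by (rule gram_entries_add[OF carrier(3,1) fin(3,1) disj(3) gram_C gram_A])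
  have gram_ABC: "\<forall>i<N. \<forall>j<N. (A + B + C) $$ (i, j) = gram (JA \<union> JB \<union> JC) W i j"
    by (rule gram_entries_add[OF _ carrier(3) _ fin(3) _ gram_AB gram_C])
      (use carrier fin disj in auto)
  have "A + B \<in> carrier_mat N N" "B + C \<in> carrier_mat N N" "C + A \<in> carrier_mat N N"
    "A + B + C \<in> carrier_mat N N"
    using carrier by auto
  then have "e_k k A = ?e JA" "e_k k B = ?e JB" "e_k k C = ?e JC"
    "e_k k (A + B) = ?e (JA \<union> JB)" "e_k k (B + C) = ?e (JB \<union> JC)" "e_k k (C + A) = ?e (JC \<union> JA)"
    "e_k k (A + B + C) = ?e (JA \<union> JB \<union> JC)"
    using carrier gram_A gram_B gram_C gram_AB gram_BC gram_CA gram_ABC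
    by (simp_all add: e_k_gram k)
  moreover have "?e (JA \<union> JB) + ?e (JB \<union> JC) + ?e (JC \<union> JA)
      \<le> ?e JA + ?e JB + ?e JC + ?e (JA \<union> JB \<union> JC)"
    unfolding sum.distrib[symmetric]
    by (intro sum_mono principal_minor_gram_inclusion_exclusion[OF _ fin disj])
      (auto intro: finite_subset)
  ultimately show ?thesis by simp
qed

theorem lemma5p4:
  fixes N k :: nat and A B C :: "real mat"
  assumes "psd_mat N A" and "psd_mat N B" and "psd_mat N C" and "k \<le> N"
  shows "e_k k A + e_k k B + e_k k C + e_k k (A + B + C)
         \<ge> e_k k (A + B) + e_k k (B + C) + e_k k (C + A)"
proof -
  obtain wA wB wC where
    wA: "\<forall>i<N. \<forall>j<N. A $$ (i, j) = gram {..<N} wA i j" and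
    wB: "\<forall>i<N. \<forall>j<N. B $$ (i, j) = gram {..<N} wB i j" and
    wC: "\<forall>i<N. \<forall>j<N. C $$ (i, j) = gram {..<N} wC i j"
    using psd_mat_gram assms(1-3) by metis
  define W :: "nat \<times> nat \<Rightarrow> nat \<Rightarrow> real"
    where "W = (\<lambda>(c, l). if c = 0 then wA l else if c = 1 then wB l else wC l)"
  have gram_W: "gram (Pair c ` {..<N}) W = gram {..<N} (\<lambda>l. W (c, l))" for c
    by (rule gram_image) (simp add: inj_on_def)
  have carrier: "A \<in> carrier_mat N N" "B \<in> carrier_mat N N" "C \<in> carrier_mat N N"
    using assms(1-3) unfolding psd_mat_def by auto
  have grams: "\<forall>i<N. \<forall>j<N. A $$ (i, j) = gram (Pair 0 ` {..<N}) W i j"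
    "\<forall>i<N. \<forall>j<N. B $$ (i, j) = gram (Pair 1 ` {..<N}) W i j"
    "\<forall>i<N. \<forall>j<N. C $$ (i, j) = gram (Pair 2 ` {..<N}) W i j"
    using wA wB wC unfolding gram_W by (simp_all add: W_def)
  show ?thesis
    by (rule e_k_gram_inclusion_exclusion[OF carrier assms(4) _ _ _ _ _ _ grams]) auto
qed

end
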